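(* Let $\rho>0$ and $n\in\mathbb{Z}_+$. For the ancestral chain started at $(n,0,1)$ with $s(0)=0$, $\mathbb{P}_{n,0,1,0}[s(\tau)=0]=\prod_{i=1}^n\frac{i(i+1)}{i(i+1)+\rho}$, where $\tau=\inf\{s\ge0:(a(s),b(s),c(s))\in\{(0,0,1),(1,1,0)\}\}$ (the empty product being $1$).
   Context: The ancestral chain $(a(t),b(t),c(t))$ with parameter $\rho$ is the continuous-time Markov chain on $\mathbb{Z}_+^3\setminus\{\mathbf 0\}$ which from $(a,b,c)$ jumps to $(a+1,b+1,c-1)$ at rate $c\rho/2$ (a recombination event), to $(a-1,b-1,c+1)$ at rate $ab$, to $(a-1,b,c)$ at rate $ac+a(a-1)/2$, to $(a,b-1,c)$ at rate $bc+b(b-1)/2$, and to $(a,b,c-1)$ at rate $c(c-1)/2$. $s(t)$ is the number of recombination jumps in $(0,t)$. *)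

theory Defs
  imports Complex_Main
begin

text \<open>Extended state (a, b, c, s): the ancestral chain state together with the
  recombination counter s.\<close>

type_synonym anc_state = "nat \<times> nat \<times> nat \<times> nat"

fun anc_transitions :: "real \<Rightarrow> anc_state \<Rightarrow> (real \<times> anc_state) list" where
  "anc_transitions \<rho> (a, b, c, s) =
     (if c \<ge> 1 then [(real c * \<rho> / 2, (a + 1, b + 1, c - 1, s + 1))] else []) @
     (if a \<ge> 1 \<and> b \<ge> 1 then [(real a * real b, (a - 1, b - 1, c + 1, s))] else []) @
     (if a \<ge> 1 then [(real a * real c + real a * (real a - 1) / 2, (a - 1, b, c, s))] else []) @
     (if b \<ge> 1 then [(real b * real c + real b * (real b - 1) / 2, (a, b - 1, c, s))] else []) @
     (if c \<ge> 1 then [(real c * (real c - 1) / 2, (a, b, c - 1, s))] else [])"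

definition anc_total_rate :: "real \<Rightarrow> anc_state \<Rightarrow> real" where
  "anc_total_rate \<rho> x = (\<Sum>(r, y) \<leftarrow> anc_transitions \<rho> x. r)"

definition anc_target :: "anc_state \<Rightarrow> bool" where
  "anc_target x = (case x of (a, b, c, s) \<Rightarrow> (a, b, c) = (0, 0, 1) \<or> (a, b, c) = (1, 1, 0))"

text \<open>Probability, starting from x, that the chain reaches the target set within
  k jumps and that at this (first) hitting time the counter s equals 0.
  The embedded jump chain moves from x to y with probability rate / total rate.\<close>
fun anc_hit_s0 :: "real \<Rightarrow> nat \<Rightarrow> anc_state \<Rightarrow> real" where
  "anc_hit_s0 \<rho> 0 x =
     (if anc_target x then (if snd (snd (snd x)) = 0 then 1 else 0) else 0)"
| "anc_hit_s0 \<rho> (Suc k) x =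
     (if anc_target x then (if snd (snd (snd x)) = 0 then 1 else 0)
      else (\<Sum>(r, y) \<leftarrow> anc_transitions \<rho> x. r / anc_total_rate \<rho> x * anc_hit_s0 \<rho> k y))"

text \<open>P_{a,b,c,s}[tau < infinity and s(tau) = 0] = probability of the union over k
  of the events "hit within k jumps with s = 0".\<close>
definition anc_prob_s_tau_zero :: "real \<Rightarrow> anc_state \<Rightarrow> real" where
  "anc_prob_s_tau_zero \<rho> x = (SUP k. anc_hit_s0 \<rho> k x)"

end

theory Submission
  imports Defs
begin

text \<open>From \<open>(a, 0, 1)\<close> with \<open>a \<ge> 1\<close> the only jumps of positive rate are a recombination,
  after which \<open>s > 0\<close> for good, and the loss of one of the \<open>a\<close> lineages, at total rate
  \<open>a + a(a - 1)/2 = a(a + 1)/2\<close>, leading to \<open>(a - 1, 0, 1)\<close>.  So the chain reaches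
  \<open>(0, 0, 1)\<close> with \<open>s = 0\<close> exactly when each of these \<open>n\<close> competitions is won by
  coalescence, which has probability \<open>i(i + 1) / (i(i + 1) + \<rho>)\<close> at level \<open>i\<close>.\<close>

lemma anc_hit_s0_counter_pos:
  assumes "s \<ge> 1"
  shows "anc_hit_s0 \<rho> k (a, b, c, s) = 0"
  using assms by (induction k arbitrary: a b c s) simp_all

lemma anc_total_rate_single_c:
  "anc_total_rate \<rho> (a, 0, 1, s) = (real a * real (a + 1) + \<rho>) / 2"
  by (cases a) (simp_all add: anc_total_rate_def field_simps)

lemma anc_hit_s0_Suc_single_c:
  assumes "\<rho> \<ge> 0" and "a \<ge> 1"
  shows "anc_hit_s0 \<rho> (Suc k) (a, 0, 1, 0) =
           real a * real (a + 1) / (real a * real (a + 1) + \<rho>) * anc_hit_s0 \<rho> k (a - 1, 0, 1, 0)"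
proof -
  have "\<not> anc_target (a, 0, 1, 0)"
    using assms(2) by (simp add: anc_target_def)
  then have "anc_hit_s0 \<rho> (Suc k) (a, 0, 1, 0) =
      (real a + real a * (real a - 1) / 2) / anc_total_rate \<rho> (a, 0, 1, 0)
        * anc_hit_s0 \<rho> k (a - 1, 0, 1, 0)"
    using assms(2) by (simp add: anc_hit_s0_counter_pos)
  also have "\<dots> = (real a * real (a + 1) / 2) / ((real a * real (a + 1) + \<rho>) / 2)
        * anc_hit_s0 \<rho> k (a - 1, 0, 1, 0)"
    by (simp only: anc_total_rate_single_c) (simp add: field_simps)
  also have "\<dots> = real a * real (a + 1) / (real a * real (a + 1) + \<rho>)
        * anc_hit_s0 \<rho> k (a - 1, 0, 1, 0)"
    by simp
  finally show ?thesis .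
qed

lemma anc_hit_s0_single_c:
  assumes "\<rho> \<ge> 0"
  shows "anc_hit_s0 \<rho> k (n, 0, 1, 0) =
           (if n \<le> k then \<Prod>i = 1..n. real i * real (i + 1) / (real i * real (i + 1) + \<rho>) else 0)"
proof (induction k arbitrary: n)
  case 0
  then show ?case by (cases n) (simp_all add: anc_target_def)
next
  case (Suc k)
  show ?case
  proof (cases n)
    case 0
    then show ?thesis by (simp add: anc_target_def)
  next
    case (Suc m)
    then show ?thesis
      using anc_hit_s0_Suc_single_c[OF assms, of n k] Suc.IH[of m]
      by (simp add: prod.cl_ivl_Suc mult.commute)
  qed
qed

theorem mainTheorem10:
  fixes \<rho> :: real and n :: nat
  assumes "\<rho> > 0"
  shows "anc_prob_s_tau_zero \<rho> (n, 0, 1, 0) =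
           (\<Prod>i = 1..n. real i * real (i + 1) / (real i * real (i + 1) + \<rho>))"
proof -
  let ?P = "\<Prod>i = 1..n. real i * real (i + 1) / (real i * real (i + 1) + \<rho>)"
  have hit: "anc_hit_s0 \<rho> k (n, 0, 1, 0) = (if n \<le> k then ?P else 0)" for k
    using anc_hit_s0_single_c assms by (simp only: less_imp_le)
  have "?P \<ge> 0"
    using assms by (intro prod_nonneg) (simp add: add_nonneg_nonneg)
  then have "(SUP k. anc_hit_s0 \<rho> k (n, 0, 1, 0)) = ?P"
    unfolding hit by (intro cSup_eq_maximum) (auto intro!: range_eqI[of _ _ n])
  then show ?thesis
    by (simp add: anc_prob_s_tau_zero_def)
qed

end
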